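(* Let $P=(p_1,\dots,p_l)$ be a distribution on $\{x_1,\dots,x_l\}$ with $p_j\in(0,1)$ for all $j$, and let $\hat P=(\hat p_j)_{j=1}^l$ be the empirical distribution constructed from $T\ge 1$ i.i.d. draws from $P$. Define $\rho_1(p)\coloneqq\sqrt{(1-p)/p}$, $\rho_2(p)\coloneqq\rho_1(p)+\rho_1(1-p)$, $c^{(s)}\coloneqq\sum_{j=1}^l\rho_1(p_j)$, and $\tilde c^{(s)}\coloneqq\max\{\rho_2(p_S): S\subset[l],\,1\le |S|<l\}$ where $p_S\coloneqq\sum_{j\in S}p_j$. Then there exist constants $C^{(s)},\tilde C^{(s)}\ge 0$ depending only on $P$ (not on $T$) such that for every $T\ge1$, $$\tilde c^{(s)}\sqrt{\frac{1}{2\pi T}}-\frac{\tilde C^{(s)}}{T}\;\le\;\mathbb E\big[D_s(\hat P,P)\big]\;\le\; c^{(s)}\sqrt{\frac{1}{2\pi T}}+\frac{C^{(s)}}{T}.$$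
   Context: The separation distance between distributions $P$ and $Q$ on $\{x_1,\dots,x_l\}$ with all $q_j>0$ is $D_s(P,Q)\coloneqq\max_{j\in[l]}(1-p_j/q_j)$; thus $D_s(\hat P,P)=\max_j(1-\hat p_j/p_j)$. The empirical distribution has $\hat p_j=T_j/T$ where $T_j$ is the number of draws equal to $x_j$. *)

theory Defs
  imports Complex_Main
begin

(* Outcomes are indexed 0..l-1; p j is the probability of outcome x_j. *)

definition rho1 :: "real \<Rightarrow> real" where
  "rho1 q = sqrt ((1 - q) / q)"

definition rho2 :: "real \<Rightarrow> real" where
  "rho2 q = rho1 q + rho1 (1 - q)"

definition sep_dist :: "nat \<Rightarrow> (nat \<Rightarrow> real) \<Rightarrow> (nat \<Rightarrow> real) \<Rightarrow> real" where
  "sep_dist l P Q = Max ((\<lambda>j. 1 - P j / Q j) ` {0..<l})"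

definition empirical :: "nat list \<Rightarrow> nat \<Rightarrow> real" where
  "empirical xs j = real (length (filter (\<lambda>x. x = j) xs)) / real (length xs)"

definition samples :: "nat \<Rightarrow> nat \<Rightarrow> nat list set" where
  "samples l T = {xs. length xs = T \<and> set xs \<subseteq> {0..<l}}"

definition iid_expect :: "nat \<Rightarrow> (nat \<Rightarrow> real) \<Rightarrow> nat \<Rightarrow> (nat list \<Rightarrow> real) \<Rightarrow> real" where
  "iid_expect l p T f = (\<Sum>xs\<in>samples l T. (\<Prod>x\<leftarrow>xs. p x) * f xs)"

definition c_s :: "nat \<Rightarrow> (nat \<Rightarrow> real) \<Rightarrow> real" where
  "c_s l p = (\<Sum>j<l. rho1 (p j))"

definition c_s_tilde :: "nat \<Rightarrow> (nat \<Rightarrow> real) \<Rightarrow> real" where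
  "c_s_tilde l p = Max {rho2 (\<Sum>j\<in>S. p j) | S. S \<subseteq> {0..<l} \<and> 1 \<le> card S \<and> card S < l}"

end

theory Submission
  imports Defs "HOL-Analysis.Analysis" "HOL-Real_Asymp.Real_Asymp"
begin

text \<open>Pointwise, \<open>D\<^sub>s(\<hat>P, P) \<le> \<Sum>\<^sub>j (p\<^sub>j - \<hat>p\<^sub>j)\<^sup>+ / p\<^sub>j\<close>,
  and for every nonempty proper \<open>S \<subseteq> [l]\<close> with \<open>r = p\<^sub>S\<close>,
  \<open>D\<^sub>s(\<hat>P, P) \<ge> (r - \<hat>p\<^sub>S)\<^sup>+ / r + (\<hat>p\<^sub>S - r)\<^sup>+ / (1 - r)\<close>.
  The number of draws in \<open>S\<close> is \<open>Bin(T, r)\<close>, and both expected positive parts equal the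
  binomial shortfall \<open>E (r - K/T)\<^sup>+\<close>. De Moivre's formula writes the shortfall as
  \<open>m (1 - r) P(K = m) / T\<close> with \<open>m = \<lceil>T r\<rceil>\<close>, and Stirling's formula with error
  \<open>1/j\<close>, derived from Wallis' product, turns this into \<open>\<surd>(r (1 - r) / (2 \<pi> T)) + O(1/T)\<close>.
  Since \<open>\<surd>(p (1 - p)) / p = \<rho>\<^sub>1(p)\<close> and \<open>\<surd>(r (1 - r)) / (r (1 - r)) = \<rho>\<^sub>2(r)\<close>,
  this gives the two bounds.\<close>

section \<open>Stirling's formula with explicit error\<close>

lemma ln_one_plus_ge:
  fixes x :: real
  assumes "0 \<le> x"
  shows "2 * x / (2 + x) \<le> ln (1 + x)"
proof -
  let ?f = "\<lambda>t::real. ln (1 + t) - 2 * t / (2 + t)"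
  have "?f 0 \<le> ?f x"
  proof (rule DERIV_nonneg_imp_nondecreasing[OF assms])
    fix t :: real
    assume t: "0 \<le> t" "t \<le> x"
    have "DERIV ?f t :> 1 / (1 + t) - 4 / (2 + t)^2"
      using t by (auto intro!: derivative_eq_intros simp: field_simps power2_eq_square)
    moreover have "4 / (2 + t)^2 \<le> 1 / (1 + t)"
      using t by (simp add: divide_simps power2_eq_square algebra_simps)
    ultimately show "\<exists>y. DERIV ?f t :> y \<and> 0 \<le> y"
      by auto
  qed
  then show ?thesis
    by simp
qed

lemma ln_one_plus_le:
  fixes x :: real
  assumes "0 \<le> x"
  shows "ln (1 + x) \<le> x - x^2 / 2 + x^3 / 3"
proof -
  let ?f = "\<lambda>t::real. t - t^2 / 2 + t^3 / 3 - ln (1 + t)"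
  have "?f 0 \<le> ?f x"
  proof (rule DERIV_nonneg_imp_nondecreasing[OF assms])
    fix t :: real
    assume t: "0 \<le> t" "t \<le> x"
    have "DERIV ?f t :> 1 - t + t^2 - 1 / (1 + t)"
      using t by (auto intro!: derivative_eq_intros simp: field_simps power2_eq_square)
    moreover have "1 / (1 + t) \<le> 1 - t + t^2"
      using t by (simp add: divide_simps power2_eq_square algebra_simps)
    ultimately show "\<exists>y. DERIV ?f t :> y \<and> 0 \<le> y"
      by auto
  qed
  then show ?thesis
    by simp
qed

text \<open>The logarithm of \<open>j! / ((j/e)^j \<surd>j)\<close>, which Stirling's formula says tends to \<open>ln \<surd>(2\<pi>)\<close>.\<close>

definition stirling_rem :: "nat \<Rightarrow> real" where
  "stirling_rem j = ln (fact j) + real j - (real j + 1/2) * ln (real j)"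

lemma ln_fact_eq_stirling_rem:
  "ln (fact j :: real) = stirling_rem j - real j + (real j + 1/2) * ln (real j)"
  unfolding stirling_rem_def by simp

lemma stirling_rem_diff:
  assumes "j \<ge> 1"
  shows "stirling_rem j - stirling_rem (Suc j) = (real j + 1/2) * ln (1 + 1 / real j) - 1"
proof -
  have j: "real j > 0"
    using assms by simp
  have "1 + 1 / real j = real (Suc j) / real j"
    using j by (simp add: field_simps)
  then have ln_eq: "ln (1 + 1 / real j) = ln (real (Suc j)) - ln (real j)"
    using j by (simp add: ln_div)
  have ln_fact_eq: "ln (fact (Suc j) :: real) = ln (real (Suc j)) + ln (fact j)"
    by (subst fact_Suc) (rule ln_mult_pos, auto)
  show ?thesis
    unfolding stirling_rem_def ln_eq ln_fact_eq by (simp add: algebra_simps)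
qed

lemma stirling_rem_Suc_le:
  assumes "j \<ge> 1"
  shows "stirling_rem (Suc j) \<le> stirling_rem j"
proof -
  have j: "real j > 0"
    using assms by simp
  have "1 / (real j + 1/2) = 2 * (1 / real j) / (2 + 1 / real j)"
    using j by (simp add: field_simps)
  also have "\<dots> \<le> ln (1 + 1 / real j)"
    by (rule ln_one_plus_ge) simp
  finally have "1 \<le> (real j + 1/2) * ln (1 + 1 / real j)"
    using j by (simp add: divide_simps mult.commute)
  then show ?thesis
    using stirling_rem_diff[OF assms] by simp
qed

lemma stirling_rem_diff_le:
  assumes "j \<ge> 1"
  shows "stirling_rem j - stirling_rem (Suc j) \<le> 1 / real j - 1 / real (Suc j)"
proof -
  define y where "y = real j"
  have y: "y \<ge> 1"
    using assms y_def by simp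
  have "(y + 1/2) * ln (1 + 1/y) \<le> (y + 1/2) * (1/y - (1/y)^2 / 2 + (1/y)^3 / 3)"
    using y by (intro mult_left_mono ln_one_plus_le) auto
  also have "\<dots> = 1 + (y + 2) / (12 * y^3)"
    using y by (simp add: field_simps power2_eq_square power3_eq_cube)
  also have "(y + 2) / (12 * y^3) \<le> 1 / y - 1 / (y + 1)"
  proof -
    have "y \<le> y * y" "1 \<le> y * y"
      using y mult_mono[of 1 y 1 y] mult_left_mono[of 1 y y] by simp_all
    then have "(y + 2) * (y + 1) \<le> 12 * y^2"
      by (simp add: power2_eq_square algebra_simps)
    then have "y * ((y + 2) * (y + 1)) \<le> y * (12 * y^2)"
      using y by (intro mult_left_mono) auto
    then have "(y + 2) * (y * (y + 1)) \<le> 12 * y^3"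
      by (simp add: power2_eq_square power3_eq_cube algebra_simps)
    moreover have "1 / y - 1 / (y + 1) = 1 / (y * (y + 1))"
      using y by (simp add: field_simps)
    ultimately show ?thesis
      using y by (simp add: divide_simps)
  qed
  finally show ?thesis
    using stirling_rem_diff[OF assms] by (simp add: y_def add.commute)
qed

lemma stirling_rem_convergent:
  obtains L where "stirling_rem \<longlonglongrightarrow> L"
    and "\<And>j. j \<ge> 1 \<Longrightarrow> L \<le> stirling_rem j \<and> stirling_rem j \<le> L + 1 / real j"
proof -
  define f where "f n = stirling_rem (Suc n) - 1 / real (Suc n)" for n
  define g where "g n = stirling_rem (Suc n)" for n
  have "f n \<le> f (Suc n)" for n
    using stirling_rem_diff_le[of "Suc n"] unfolding f_def by simp
  moreover have "g (Suc n) \<le> g n" for n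
    using stirling_rem_Suc_le[of "Suc n"] unfolding g_def by simp
  moreover have "f n \<le> g n" for n
    unfolding f_def g_def by simp
  moreover have "(\<lambda>n. f n - g n) \<longlonglongrightarrow> 0"
    unfolding f_def g_def by simp real_asymp
  ultimately obtain L where L: "\<forall>n. f n \<le> L" "\<forall>n. L \<le> g n" "g \<longlonglongrightarrow> L"
    using nested_sequence_unique by metis
  have "stirling_rem \<longlonglongrightarrow> L"
    using L(3) unfolding g_def by (simp add: filterlim_sequentially_Suc)
  moreover have "L \<le> stirling_rem j \<and> stirling_rem j \<le> L + 1 / real j" if j: "j \<ge> 1" for j
  proof -
    obtain n where "j = Suc n"
      using j by (cases j) auto
    then show ?thesis
      using L(1,2) unfolding f_def g_def by (auto simp: algebra_simps)
  qed
  ultimately show thesis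
    using that by blast
qed

lemma wallis_product_eq:
  "(\<Prod>k=1..n. (4 * real k^2) / (4 * real k^2 - 1)) =
     (2^n * fact n)^4 / ((fact (2*n))^2 * (2 * real n + 1))"
proof (induction n)
  case 0
  then show ?case
    by simp
next
  case (Suc n)
  have step: "(P * F)^4 / (G^2 * (2*x + 1)) * ((4 * (x + 1)^2) / (4 * (x + 1)^2 - 1)) =
      (2 * P * ((x + 1) * F))^4 / (((2*x + 2) * (2*x + 1) * G)^2 * (2 * (x + 1) + 1))"
    if "0 < P" "0 < F" "0 < G" "0 \<le> x" for P F G x :: real
  proof -
    have "4 * (x + 1)^2 - 1 = (2*x + 1) * (2*x + 3)"
      by (simp add: algebra_simps power2_eq_square)
    then show ?thesis
      using that by (simp add: divide_simps power_mult_distrib)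
        (simp add: algebra_simps power2_eq_square power4_eq_xxxx)
  qed
  have "(fact (2 * Suc n) :: real) = (2 * real n + 2) * (2 * real n + 1) * fact (2 * n)"
    by (simp add: algebra_simps)
  moreover have "(2::real)^Suc n * fact (Suc n) = 2 * 2^n * ((real n + 1) * fact n)"
    by (simp add: algebra_simps)
  ultimately show ?case
    using Suc step[of "2^n" "fact n" "fact (2 * n)" "real n"] by (simp add: add.commute)
qed

lemma ln_wallis_product:
  assumes "n \<ge> 1"
  shows "ln (\<Prod>k=1..n. (4 * real k^2) / (4 * real k^2 - 1)) =
    4 * stirling_rem n - 2 * stirling_rem (2*n) - ln 2 + ln (real n / (2 * real n + 1))"
proof -
  have n: "real n > 0"
    using assms by simp
  have "ln ((2^n * fact n)^4 / ((fact (2*n))^2 * (2 * real n + 1)) :: real) =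
     4 * (real n * ln 2 + ln (fact n)) - 2 * ln (fact (2*n)) - ln (2 * real n + 1)"
    using n by (simp add: ln_div ln_mult_pos ln_realpow)
  moreover have "ln (real (2 * n)) = ln 2 + ln (real n)"
    using n by (simp add: ln_mult_pos)
  moreover have "ln (real n / (2 * real n + 1)) = ln (real n) - ln (2 * real n + 1)"
    using n by (simp add: ln_div)
  ultimately show ?thesis
    unfolding wallis_product_eq ln_fact_eq_stirling_rem by (simp add: algebra_simps)
qed

lemma stirling_rem_bounds:
  assumes "j \<ge> 1"
  shows "ln (sqrt (2 * pi)) \<le> stirling_rem j \<and> stirling_rem j \<le> ln (sqrt (2 * pi)) + 1 / real j"
proof -
  obtain L where lim: "stirling_rem \<longlonglongrightarrow> L"
    and bounds: "\<And>j. j \<ge> 1 \<Longrightarrow> L \<le> stirling_rem j \<and> stirling_rem j \<le> L + 1 / real j"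
    using stirling_rem_convergent by blast
  define W where "W n = (\<Prod>k=1..n. (4 * real k^2) / (4 * real k^2 - 1))" for n
  have "W \<longlonglongrightarrow> pi / 2"
    unfolding W_def by (rule wallis)
  then have lim_wallis: "(\<lambda>n. ln (W (Suc n))) \<longlonglongrightarrow> ln (pi / 2)"
    by (intro tendsto_ln) (simp_all add: filterlim_sequentially_Suc)
  have lim_even: "(\<lambda>n. stirling_rem (2*n)) \<longlonglongrightarrow> L"
    by (rule LIMSEQ_subseq_LIMSEQ[OF lim, unfolded o_def]) (simp add: strict_mono_def)
  have lim_ratio: "(\<lambda>n. real n / (2 * real n + 1)) \<longlonglongrightarrow> 1/2"
    by real_asymp
  have "(\<lambda>n. 4 * stirling_rem n - 2 * stirling_rem (2*n) - ln 2 + ln (real n / (2 * real n + 1)))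
      \<longlonglongrightarrow> 4 * L - 2 * L - ln 2 + ln (1/2)"
    by (intro tendsto_intros lim lim_even lim_ratio) simp
  then have "(\<lambda>n. ln (W (Suc n))) \<longlonglongrightarrow> 4 * L - 2 * L - ln 2 + ln (1/2)"
    unfolding W_def
    by (subst ln_wallis_product, simp, subst filterlim_sequentially_Suc) (simp del: of_nat_Suc)
  then have "ln (pi / 2) = 2 * L - 2 * ln 2"
    using LIMSEQ_unique[OF lim_wallis] by (simp add: ln_div)
  then have "L = ln (sqrt (2 * pi))"
    by (simp add: ln_sqrt ln_div ln_mult_pos)
  then show ?thesis
    using bounds[OF assms] by simp
qed

section \<open>The binomial shortfall\<close>

definition binom_prob :: "nat \<Rightarrow> real \<Rightarrow> nat \<Rightarrow> real" where
  "binom_prob n r k = real (n choose k) * r^k * (1 - r)^(n - k)"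

definition binom_shortfall :: "nat \<Rightarrow> real \<Rightarrow> real" where
  "binom_shortfall n r = (\<Sum>k\<le>n. binom_prob n r k * max 0 (r - real k / real n))"

lemma binom_prob_nonneg: "0 \<le> r \<Longrightarrow> r \<le> 1 \<Longrightarrow> 0 \<le> binom_prob n r k"
  unfolding binom_prob_def by simp

lemma sum_binom_prob: "(\<Sum>k\<le>n. binom_prob n r k) = 1"
  using binomial_ring[of r "1 - r" n] unfolding binom_prob_def by simp

lemma Suc_mult_binom_prob_Suc:
  "real (Suc k) * (1 - r) * binom_prob n r (Suc k) = real (n - k) * r * binom_prob n r k"
proof (cases "k < n")
  case True
  have "Suc k * (n choose Suc k) = (n - k) * (n choose k)"
    using Suc_times_binomial_eq[of "n - 1" k] binomial_absorb_comp[of n k] True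
    by (simp add: mult.commute)
  then have "real (Suc k) * real (n choose Suc k) = real (n - k) * real (n choose k)"
    by (metis of_nat_mult)
  moreover have "(1 - r)^(n - k) = (1 - r) * (1 - r)^(n - Suc k)"
    using True by (metis Suc_diff_Suc power_Suc)
  ultimately have "(real (Suc k) * real (n choose Suc k)) * (r * r^k) * ((1 - r) * (1 - r)^(n - Suc k))
      = (real (n - k) * real (n choose k)) * (r * r^k) * (1 - r)^(n - k)"
    by simp
  then show ?thesis
    by (simp add: binom_prob_def mult_ac)
qed (simp add: binom_prob_def)

lemma sum_binom_prob_Suc:
  "(\<Sum>k\<le>Suc n. binom_prob (Suc n) r k * g k)
     = r * (\<Sum>k\<le>n. binom_prob n r k * g (Suc k)) + (1 - r) * (\<Sum>k\<le>n. binom_prob n r k * g k)"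
proof -
  define q where "q = 1 - r"
  define h where "h k = real (n choose k) * r^k * q^(Suc n - k) * g k" for k
  have "(\<Sum>k\<le>Suc n. binom_prob (Suc n) r k * g k)
      = binom_prob (Suc n) r 0 * g 0 + (\<Sum>k\<le>n. binom_prob (Suc n) r (Suc k) * g (Suc k))"
    by (rule sum.atMost_Suc_shift)
  also have "(\<Sum>k\<le>n. binom_prob (Suc n) r (Suc k) * g (Suc k))
      = r * (\<Sum>k\<le>n. binom_prob n r k * g (Suc k)) + (\<Sum>k\<le>n. h (Suc k))"
    unfolding sum_distrib_left sum.distrib[symmetric]
    by (rule sum.cong) (auto simp: binom_prob_def h_def q_def algebra_simps)
  also have "binom_prob (Suc n) r 0 * g 0 + (r * (\<Sum>k\<le>n. binom_prob n r k * g (Suc k)) + (\<Sum>k\<le>n. h (Suc k)))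
      = r * (\<Sum>k\<le>n. binom_prob n r k * g (Suc k)) + (\<Sum>k\<le>Suc n. h k)"
    unfolding sum.atMost_Suc_shift[of h] by (simp add: h_def binom_prob_def q_def)
  also have "(\<Sum>k\<le>Suc n. h k) = (\<Sum>k\<le>n. h k)"
    by (simp add: h_def)
  also have "\<dots> = (1 - r) * (\<Sum>k\<le>n. binom_prob n r k * g k)"
    unfolding sum_distrib_left
    by (rule sum.cong) (auto simp: h_def binom_prob_def q_def Suc_diff_le algebra_simps)
  finally show ?thesis .
qed

lemma sum_binom_prob_centered_from:
  assumes "m \<le> n"
  shows "(\<Sum>k=m..n. (real k - real n * r) * binom_prob n r k) = real m * (1 - r) * binom_prob n r m"
proof -
  define t where "t k = real k * (1 - r) * binom_prob n r k" for k
  have "(real k - real n * r) * binom_prob n r k = t k - t (Suc k)" if "k \<le> n" for k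
  proof -
    have "t (Suc k) = real (n - k) * r * binom_prob n r k"
      unfolding t_def by (rule Suc_mult_binom_prob_Suc)
    then show ?thesis
      using that by (simp add: t_def of_nat_diff algebra_simps)
  qed
  then have "(\<Sum>k=m..n. (real k - real n * r) * binom_prob n r k) = (\<Sum>k=m..n. t k - t (Suc k))"
    by (intro sum.cong) auto
  also have "\<dots> = t m - t (Suc n)"
    using sum_Suc_diff[of m n t] assms by (simp add: sum_subtractf)
  also have "t (Suc n) = 0"
    by (simp add: t_def binom_prob_def)
  finally show ?thesis
    by (simp add: t_def)
qed

lemma sum_binom_prob_centered: "(\<Sum>k\<le>n. (real k - real n * r) * binom_prob n r k) = 0"
  using sum_binom_prob_centered_from[of 0 n r] by (simp add: atLeast0AtMost)

text \<open>De Moivre's closed form of the mean deviation of the binomial distribution.\<close>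

lemma binom_shortfall_eq:
  assumes n: "n \<ge> 1" and r: "0 < r" "r < 1"
    and m: "m = nat \<lceil>real n * r\<rceil>"
  shows "binom_shortfall n r = real m * (1 - r) * binom_prob n r m / real n"
proof -
  have npos: "real n > 0"
    using n by simp
  have "real n * r \<le> real n"
    using r npos by simp
  then have "m \<le> n"
    unfolding m by simp
  then have split: "{..n} = {..<m} \<union> {m..n}"
    by auto
  have below: "real k < real n * r \<longleftrightarrow> k < m" for k
    unfolding m by linarith
  let ?d = "\<lambda>k. (real k - real n * r) * binom_prob n r k"
  let ?f = "\<lambda>k. binom_prob n r k * max 0 (r - real k / real n)"
  have "binom_shortfall n r = sum ?f {..<m} + sum ?f {m..n}"
    unfolding binom_shortfall_def split by (rule sum.union_disjoint) auto
  moreover have "sum ?f {m..n} = 0"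
  proof (rule sum.neutral, rule ballI)
    fix k
    assume "k \<in> {m..n}"
    then have "r \<le> real k / real n"
      using below[of k] npos by (simp add: field_simps)
    then show "?f k = 0"
      by simp
  qed
  moreover have "?f k = - ?d k / real n" if "k < m" for k
  proof -
    have "real k / real n \<le> r"
      using below[of k] that npos by (simp add: field_simps)
    then have max_eq: "max 0 (r - real k / real n) = r - real k / real n"
      by simp
    show ?thesis
      unfolding max_eq using npos by (simp add: field_simps)
  qed
  ultimately have "binom_shortfall n r = (\<Sum>k<m. - ?d k) / real n"
    by (simp add: sum_divide_distrib)
  also have "(\<Sum>k<m. - ?d k) = (\<Sum>k=m..n. ?d k) - (\<Sum>k\<le>n. ?d k)"
    unfolding split by (subst sum.union_disjoint) (auto simp: sum_negf)
  also have "\<dots> = real m * (1 - r) * binom_prob n r m"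
    using sum_binom_prob_centered_from[OF \<open>m \<le> n\<close>] sum_binom_prob_centered by simp
  finally show ?thesis .
qed

lemma binom_excess_eq_shortfall:
  assumes "n \<ge> 1"
  shows "(\<Sum>k\<le>n. binom_prob n r k * max 0 (real k / real n - r)) = binom_shortfall n r"
proof -
  have npos: "real n > 0"
    using assms by simp
  have "(\<Sum>k\<le>n. binom_prob n r k * max 0 (real k / real n - r)) - binom_shortfall n r
     = (\<Sum>k\<le>n. (real k - real n * r) * binom_prob n r k) / real n"
    unfolding binom_shortfall_def sum_subtractf[symmetric] sum_divide_distrib
    by (rule sum.cong[OF refl]) (use npos in \<open>auto simp: field_simps max_def\<close>)
  then show ?thesis
    using sum_binom_prob_centered by simp
qed

lemma binom_shortfall_nonneg: "0 \<le> r \<Longrightarrow> r \<le> 1 \<Longrightarrow> 0 \<le> binom_shortfall n r"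
  unfolding binom_shortfall_def by (intro sum_nonneg mult_nonneg_nonneg binom_prob_nonneg) auto

lemma binom_shortfall_le_one:
  assumes "0 \<le> r" "r \<le> 1"
  shows "binom_shortfall n r \<le> 1"
proof -
  have "max 0 (r - real k / real n) \<le> 1" for k
    using assms by (simp add: max_def) (smt (verit) divide_nonneg_nonneg of_nat_0_le_iff)
  then have "binom_shortfall n r \<le> (\<Sum>k\<le>n. binom_prob n r k * 1)"
    unfolding binom_shortfall_def
    using assms by (intro sum_mono mult_left_mono binom_prob_nonneg) auto
  then show ?thesis
    using sum_binom_prob by simp
qed

lemma abs_exp_minus_one_le:
  fixes x :: real
  shows "\<bar>exp x - 1\<bar> \<le> \<bar>x\<bar> * exp \<bar>x\<bar>"
proof (cases "x \<ge> 0")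
  case True
  have "(1 - x) * exp x \<le> exp (- x) * exp x"
    using exp_ge_add_one_self[of "- x"] by (intro mult_right_mono) auto
  then show ?thesis
    using True by (simp add: exp_minus field_simps)
next
  case False
  have "1 - exp x \<le> - x"
    using exp_ge_add_one_self[of x] by linarith
  also have "\<dots> \<le> - x * exp (- x)"
    using False by simp
  finally show ?thesis
    using False by simp
qed

lemma ln_div_bounds:
  fixes a b :: real
  assumes "0 < b" "b \<le> a" "a - b \<le> 1"
  shows "0 \<le> ln (a / b)" "ln (a / b) \<le> 1 / b"
proof -
  show "0 \<le> ln (a / b)"
    using assms by simp
  have "ln (a / b) \<le> a / b - 1"
    using assms by (intro ln_le_minus_one) simp
  also have "\<dots> = (a - b) / b"
    using assms by (simp add: field_simps)
  also have "\<dots> \<le> 1 / b"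
    using assms by (intro divide_right_mono) auto
  finally show "ln (a / b) \<le> 1 / b" .
qed

lemma entropy_shift_bounds:
  fixes a b d :: real
  assumes "0 < a" "0 \<le> d" "d \<le> 1" "d < b"
  shows "(a + d) * ln (a / (a + d)) + (b - d) * ln (b / (b - d)) \<le> 0"
    and "-(1 / a + 1 / b) \<le> (a + d) * ln (a / (a + d)) + (b - d) * ln (b / (b - d))"
proof -
  have "(a + d) * ln (a / (a + d)) \<le> (a + d) * (a / (a + d) - 1)"
    using assms by (intro mult_left_mono ln_le_minus_one) auto
  moreover have "(b - d) * ln (b / (b - d)) \<le> (b - d) * (b / (b - d) - 1)"
    using assms by (intro mult_left_mono ln_le_minus_one) auto
  moreover have "(a + d) * (a / (a + d) - 1) + (b - d) * (b / (b - d) - 1) = 0"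
    using assms by (simp add: field_simps)
  ultimately show "(a + d) * ln (a / (a + d)) + (b - d) * ln (b / (b - d)) \<le> 0"
    by linarith
  have "(a + d) * (1 - (a + d) / a) \<le> (a + d) * ln (a / (a + d))"
    using assms ln_le_minus_one[of "(a + d) / a"] by (intro mult_left_mono) (auto simp: ln_div)
  moreover have "(b - d) * (1 - (b - d) / b) \<le> (b - d) * ln (b / (b - d))"
    using assms ln_le_minus_one[of "(b - d) / b"] by (intro mult_left_mono) (auto simp: ln_div)
  moreover have "(a + d) * (1 - (a + d) / a) + (b - d) * (1 - (b - d) / b) = - (d^2 / a + d^2 / b)"
    using assms by (simp add: field_simps power2_eq_square)
  moreover have "d^2 / a \<le> 1 / a" "d^2 / b \<le> 1 / b"
    using assms power_le_one[of d 2] by (simp_all add: divide_right_mono)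
  ultimately show "-(1 / a + 1 / b) \<le> (a + d) * ln (a / (a + d)) + (b - d) * ln (b / (b - d))"
    by linarith
qed

text \<open>Stirling's formula splits the logarithm of the binomial term into the Stirling remainders,
  a ratio of the two means, and a relative-entropy term.\<close>

lemma ln_binom_term_eq:
  assumes "m \<ge> 1" "k \<ge> 1" "0 < r" "r < 1" "n = m + k"
  shows "ln (real m * (1 - r) * binom_prob n r m / real n) - ln (sqrt (r * (1 - r) / (2 * pi * real n)))
    = (ln (sqrt (2 * pi)) + stirling_rem n - stirling_rem m - stirling_rem k)
      + ln ((1 - r) * real m / (r * real k)) / 2
      + (real m * ln (real n * r / real m) + real k * ln (real n * (1 - r) / real k))"
proof -
  have pos: "real m > 0" "real k > 0" "real n > 0" "1 - r > 0"
    using assms by auto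
  have "real (n choose m) = fact n / (fact m * fact k)"
    using assms by (simp add: binomial_fact)
  then have ln_term: "ln (real m * (1 - r) * binom_prob n r m / real n)
      = ln (real m) + ln (1 - r) + ln (fact n) - ln (fact m) - ln (fact k)
        + real m * ln r + real k * ln (1 - r) - ln (real n)"
    unfolding binom_prob_def using assms pos by (simp add: ln_mult_pos ln_div ln_realpow)
  have ln_Y: "ln (sqrt (r * (1 - r) / (2 * pi * real n))) = (ln r + ln (1 - r) - ln (2 * pi) - ln (real n)) / 2"
    using assms pos by (simp add: ln_sqrt ln_mult_pos ln_div)
  have ln_ratio: "ln ((1 - r) * real m / (r * real k)) = ln (1 - r) + ln (real m) - ln r - ln (real k)"
    using assms pos by (simp add: ln_mult_pos ln_div)
  have ln_r: "ln (real n * r / real m) = ln (real n) + ln r - ln (real m)"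
    and ln_q: "ln (real n * (1 - r) / real k) = ln (real n) + ln (1 - r) - ln (real k)"
    using assms pos by (simp_all add: ln_mult_pos ln_div)
  have ln_sqrt_2pi: "ln (sqrt (2 * pi)) = ln (2 * pi) / 2"
    by (simp add: ln_sqrt)
  have n_eq: "real n = real m + real k"
    using assms by simp
  show ?thesis
    unfolding ln_term ln_Y ln_ratio ln_r ln_q ln_fact_eq_stirling_rem ln_sqrt_2pi
    unfolding n_eq by (simp add: field_simps)
qed

lemma abs_ln_binom_term_approx:
  assumes r: "0 < r" "r < 1" and nq: "2 \<le> real n * (1 - r)"
    and n: "n = m + k" and m: "real m = real n * r + d" and d: "0 \<le> d" "d < 1"
  shows "\<bar>ln (real m * (1 - r) * binom_prob n r m / real n) - ln (sqrt (r * (1 - r) / (2 * pi * real n)))\<bar>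
    \<le> (2 / r + 3 / (1 - r) + 1 / (r * (1 - r)) + 1) / real n"
proof -
  define x q where "x = real n" and "q = 1 - r"
  have q: "0 < q" "q < 1"
    using r q_def by auto
  have x: "x \<ge> 1"
    using nq q r unfolding x_def q_def by (smt (verit) mult_le_cancel_right1 of_nat_0_le_iff)
  have k: "real k = x * q - d"
    using m n unfolding x_def q_def by (simp add: algebra_simps)
  have xr: "x * r > 0" and xq: "x * q \<ge> 2"
    using x r nq unfolding x_def q_def by auto
  have m1: "m \<ge> 1" and k1: "k \<ge> 1"
    using m k d xr xq unfolding x_def by linarith+
  have k_ge: "x * q / 2 \<le> real k"
    using k d xq by linarith
  define T1 where "T1 = ln (sqrt (2 * pi)) + stirling_rem n - stirling_rem m - stirling_rem k"
  define T2 where "T2 = ln (q * real m / (r * real k)) / 2"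
  define T3 where "T3 = real m * ln (x * r / real m) + real k * ln (x * q / real k)"
  have "1 / real m \<le> 1 / (x * r)"
    using m d xr unfolding x_def by (intro frac_le) auto
  moreover have "1 / real k \<le> 1 / (x * q / 2)"
    using k_ge xq by (intro frac_le) auto
  ultimately have T1: "-(1 / (x * r) + 2 / (x * q)) \<le> T1" "T1 \<le> 1 / x"
    using stirling_rem_bounds[of n] stirling_rem_bounds[OF m1] stirling_rem_bounds[OF k1] m1 n
    unfolding T1_def x_def by auto
  have "q * real m - r * real k = (q + r) * d"
    unfolding m k x_def by (simp add: algebra_simps)
  then have "q * real m - r * real k = d"
    unfolding q_def by simp
  moreover have "1 / (r * real k) \<le> 2 / (x * q * r)"
    using k_ge k1 r q x by (simp add: divide_simps)
  ultimately have T2: "0 \<le> T2" "T2 \<le> 1 / (x * q * r)"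
    using ln_div_bounds[of "r * real k" "q * real m"] k1 r d unfolding T2_def by auto
  have T3: "-(1 / (x * r) + 1 / (x * q)) \<le> T3" "T3 \<le> 0"
    using entropy_shift_bounds[of "x * r" d "x * q"] xr xq d
    unfolding T3_def m[folded x_def] k by auto
  have "ln (real m * q * binom_prob n r m / x) - ln (sqrt (r * q / (2 * pi * x))) = T1 + T2 + T3"
    unfolding T1_def T2_def T3_def x_def q_def using ln_binom_term_eq[OF m1 k1 r n] by simp
  moreover have "1 / x + 1 / (x * q * r) \<le> (2 / r + 3 / q + 1 / (r * q) + 1) / x"
    and "1 / (x * r) + 2 / (x * q) + (1 / (x * r) + 1 / (x * q)) \<le> (2 / r + 3 / q + 1 / (r * q) + 1) / x"
    using x r q by (simp_all add: field_simps)
  ultimately show ?thesis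
    using T1 T2 T3 unfolding x_def[symmetric] q_def[symmetric] abs_le_iff by linarith
qed

lemma sqrt_binom_variance_le_one:
  assumes "0 \<le> r" "r \<le> 1" "n \<ge> 1"
  shows "sqrt (r * (1 - r) / (2 * pi * real n)) \<le> 1"
proof -
  have "r * (1 - r) \<le> 1"
    using assms by (simp add: mult_le_one)
  moreover have "1 * 1 \<le> (2 * pi) * real n"
    using assms pi_gt3 by (intro mult_mono) auto
  ultimately have "r * (1 - r) / (2 * pi * real n) \<le> 1"
    by simp
  then show ?thesis
    by simp
qed

lemma binom_shortfall_approx_large:
  assumes r: "0 < r" "r < 1" and nq: "2 \<le> real n * (1 - r)"
  defines "D \<equiv> 2 / r + 3 / (1 - r) + 1 / (r * (1 - r)) + 1"
  shows "\<bar>binom_shortfall n r - sqrt (r * (1 - r) / (2 * pi * real n))\<bar> \<le> D * exp D / real n"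
proof -
  define Y where "Y = sqrt (r * (1 - r) / (2 * pi * real n))"
  define m where "m = nat \<lceil>real n * r\<rceil>"
  have n1: "n \<ge> 1"
    using nq r by (cases n) auto
  have npos: "real n > 0"
    using n1 by simp
  have "0 \<le> real n * r"
    using r npos by simp
  then have "\<lceil>real n * r\<rceil> \<ge> 0"
    by linarith
  then have "real m = of_int \<lceil>real n * r\<rceil>"
    unfolding m_def by simp
  then have ceil: "real n * r \<le> real m" "real m < real n * r + 1"
    using ceiling_correct[of "real n * r"] by linarith+
  then have "real m \<le> real n"
    using nq by (simp add: algebra_simps)
  then have m_le: "m \<le> n"
    by simp
  then have n_split: "n = m + (n - m)"
    by simp
  have "binom_shortfall n r = real m * (1 - r) * binom_prob n r m / real n"
    by (rule binom_shortfall_eq[OF n1 r m_def])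
  then have L: "\<bar>ln (binom_shortfall n r) - ln Y\<bar> \<le> D / real n"
    using abs_ln_binom_term_approx[OF r nq n_split, where d = "real m - real n * r"] ceil
    unfolding Y_def D_def by simp
  have "0 < binom_shortfall n r"
  proof -
    have "0 < real m"
      using ceil mult_pos_pos[OF npos r(1)] by linarith
    then show ?thesis
      unfolding binom_shortfall_eq[OF n1 r m_def] binom_prob_def
      using r npos m_le by (intro divide_pos_pos mult_pos_pos zero_less_power) auto
  qed
  moreover have Y: "0 < Y" "Y \<le> 1"
    using r npos sqrt_binom_variance_le_one[OF _ _ n1, of r] unfolding Y_def by auto
  ultimately have "binom_shortfall n r - Y = Y * (exp (ln (binom_shortfall n r) - ln Y) - 1)"
    by (simp add: exp_diff algebra_simps)
  also have "\<bar>\<dots>\<bar> \<le> 1 * (D / real n * exp D)"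
  proof -
    have D0: "0 \<le> D"
      using r unfolding D_def by simp
    then have "D / real n \<le> D / 1"
      using n1 by (intro divide_left_mono) auto
    with D0 have D: "D / real n \<le> D" "0 \<le> D"
      by simp_all
    have "\<bar>exp (ln (binom_shortfall n r) - ln Y) - 1\<bar> \<le> D / real n * exp D"
      using abs_exp_minus_one_le[of "ln (binom_shortfall n r) - ln Y"] L D
      by (smt (verit) exp_le_cancel_iff mult_mono exp_ge_zero abs_ge_zero)
    then have "Y * \<bar>exp (ln (binom_shortfall n r) - ln Y) - 1\<bar> \<le> 1 * (D / real n * exp D)"
      using Y by (intro mult_mono) auto
    then show ?thesis
      using Y by (simp add: abs_mult)
  qed
  finally show ?thesis
    unfolding Y_def by simp
qed

lemma binom_shortfall_approx:
  assumes r: "0 < r" "r < 1"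
  shows "\<exists>K\<ge>0. \<forall>n\<ge>1. \<bar>binom_shortfall n r - sqrt (r * (1 - r) / (2 * pi * real n))\<bar> \<le> K / real n"
proof -
  define D where "D = 2 / r + 3 / (1 - r) + 1 / (r * (1 - r)) + 1"
  define K where "K = D * exp D + 4 / (1 - r)"
  have D: "D \<ge> 0"
    unfolding D_def using r by simp
  have "\<bar>binom_shortfall n r - sqrt (r * (1 - r) / (2 * pi * real n))\<bar> \<le> K / real n" if n: "n \<ge> 1" for n
  proof (cases "2 \<le> real n * (1 - r)")
    case True
    then have "\<bar>binom_shortfall n r - sqrt (r * (1 - r) / (2 * pi * real n))\<bar> \<le> D * exp D / real n"
      using binom_shortfall_approx_large[OF r] unfolding D_def by blast
    also have "\<dots> \<le> K / real n"
      unfolding K_def using r by (intro divide_right_mono) auto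
    finally show ?thesis .
  next
    case False
    have "sqrt (r * (1 - r) / (2 * pi * real n)) \<le> 1"
      using r n by (intro sqrt_binom_variance_le_one) auto
    moreover have "0 \<le> sqrt (r * (1 - r) / (2 * pi * real n))"
      using r by simp
    ultimately have "\<bar>binom_shortfall n r - sqrt (r * (1 - r) / (2 * pi * real n))\<bar> \<le> 2"
      using binom_shortfall_nonneg[of r n] binom_shortfall_le_one[of r n] r
      unfolding abs_le_iff by linarith
    also have "2 \<le> (4 / (1 - r)) / real n"
      using False r n by (simp add: field_simps)
    also have "\<dots> \<le> K / real n"
      unfolding K_def using D by (intro divide_right_mono) auto
    finally show ?thesis .
  qed
  moreover have "K \<ge> 0"
    unfolding K_def using D r by simp
  ultimately show ?thesis
    by blast
qed

section \<open>Counts of i.i.d. samples\<close>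

definition count_in :: "nat set \<Rightarrow> nat list \<Rightarrow> nat" where
  "count_in S xs = length (filter (\<lambda>x. x \<in> S) xs)"

lemma empirical_eq_count_in: "empirical xs j = real (count_in {j} xs) / real (length xs)"
  unfolding empirical_def count_in_def by (simp add: eq_commute)

lemma sum_count_in_singleton:
  assumes "finite S"
  shows "(\<Sum>j\<in>S. count_in {j} xs) = count_in S xs"
proof (induction xs)
  case Nil
  then show ?case
    by (simp add: count_in_def)
next
  case (Cons a xs)
  have "(\<Sum>j\<in>S. count_in {j} (a # xs)) = (\<Sum>j\<in>S. (if a = j then 1 else 0) + count_in {j} xs)"
    by (rule sum.cong) (auto simp: count_in_def)
  also have "\<dots> = (if a \<in> S then 1 else 0) + count_in S xs"
    using Cons assms by (simp add: sum.distrib sum.delta)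
  finally show ?case
    by (simp add: count_in_def)
qed

lemma samples_0: "samples l 0 = {[]}"
  unfolding samples_def by auto

lemma samples_Suc: "samples l (Suc T) = (\<lambda>(x, xs). x # xs) ` ({0..<l} \<times> samples l T)"
  unfolding samples_def by (auto simp: length_Suc_conv image_iff)

lemma iid_expect_mono:
  assumes "\<And>j. j < l \<Longrightarrow> 0 \<le> p j" "\<And>xs. xs \<in> samples l T \<Longrightarrow> f xs \<le> g xs"
  shows "iid_expect l p T f \<le> iid_expect l p T g"
  unfolding iid_expect_def
proof (intro sum_mono mult_left_mono)
  fix xs
  assume xs: "xs \<in> samples l T"
  then show "f xs \<le> g xs"
    by (rule assms(2))
  show "0 \<le> (\<Prod>x\<leftarrow>xs. p x)"
    using xs assms(1) unfolding samples_def by (intro prod_list_nonneg) auto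
qed

lemma iid_expect_sum:
  "iid_expect l p T (\<lambda>xs. \<Sum>j\<in>J. f j xs) = (\<Sum>j\<in>J. iid_expect l p T (f j))"
  unfolding iid_expect_def sum_distrib_left by (rule sum.swap)

lemma iid_expect_count_in:
  assumes S: "S \<subseteq> {0..<l}" and p_sum: "(\<Sum>j<l. p j) = 1"
  shows "iid_expect l p T (\<lambda>xs. g (count_in S xs)) = (\<Sum>k\<le>T. binom_prob T (\<Sum>j\<in>S. p j) k * g k)"
proof (induction T arbitrary: g)
  case 0
  then show ?case
    unfolding iid_expect_def samples_0 by (simp add: binom_prob_def count_in_def)
next
  case (Suc T)
  define r where "r = (\<Sum>j\<in>S. p j)"
  define B where "B f = (\<Sum>k\<le>T. binom_prob T r k * f k)" for f
  have inj: "inj_on (\<lambda>(x, xs). x # xs) ({0..<l} \<times> samples l T)"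
    by (auto simp: inj_on_def)
  have "iid_expect l p (Suc T) (\<lambda>xs. g (count_in S xs))
      = (\<Sum>(x, xs)\<in>{0..<l} \<times> samples l T. p x * (\<Prod>y\<leftarrow>xs. p y) * g (count_in S (x # xs)))"
    unfolding iid_expect_def samples_Suc by (subst sum.reindex[OF inj]) (simp add: case_prod_unfold)
  also have "\<dots> = (\<Sum>x\<in>{0..<l}. p x * iid_expect l p T (\<lambda>xs. g (count_in S xs + (if x \<in> S then 1 else 0))))"
    unfolding sum.cartesian_product[symmetric] iid_expect_def sum_distrib_left
    by (rule sum.cong[OF refl], rule sum.cong[OF refl]) (auto simp: count_in_def algebra_simps)
  also have "\<dots> = (\<Sum>x\<in>{0..<l}. p x * (if x \<in> S then B (\<lambda>k. g (Suc k)) else B g))"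
    using Suc.IH[of "\<lambda>c. g (Suc c)"] Suc.IH[of g] unfolding B_def r_def
    by (intro sum.cong) auto
  also have "\<dots> = (\<Sum>x\<in>S. p x) * B (\<lambda>k. g (Suc k)) + (\<Sum>x\<in>{0..<l} - S. p x) * B g"
    using S by (subst sum.subset_diff[of S]) (auto simp: sum_distrib_right intro!: sum.cong)
  also have "(\<Sum>x\<in>{0..<l} - S. p x) = 1 - r"
    using S p_sum unfolding r_def by (simp add: sum_diff atLeast0LessThan)
  finally show ?case
    using sum_binom_prob_Suc[of T r g] unfolding B_def r_def by simp
qed

section \<open>Bounds on the separation distance\<close>

lemma sep_dist_le_sum_shortfalls:
  assumes xs: "xs \<in> samples l T" and T: "T \<ge> 1" and l: "l \<ge> 1"
    and p_pos: "\<And>j. j < l \<Longrightarrow> 0 < p j"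
  shows "sep_dist l (empirical xs) p \<le> (\<Sum>j<l. max 0 (p j - real (count_in {j} xs) / real T) / p j)"
  unfolding sep_dist_def
proof (subst Max_le_iff, simp, use l in simp, rule ballI)
  fix y
  assume "y \<in> (\<lambda>j. 1 - empirical xs j / p j) ` {0..<l}"
  then obtain j where j: "j < l" and y: "y = 1 - empirical xs j / p j"
    by auto
  have "length xs = T"
    using xs unfolding samples_def by simp
  then have "y = (p j - real (count_in {j} xs) / real T) / p j"
    unfolding y empirical_eq_count_in using p_pos[OF j] by (simp add: field_simps)
  also have "\<dots> \<le> max 0 (p j - real (count_in {j} xs) / real T) / p j"
    using p_pos[OF j] by (intro divide_right_mono) auto
  also have "\<dots> \<le> (\<Sum>j<l. max 0 (p j - real (count_in {j} xs) / real T) / p j)"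
    using j p_pos by (intro member_le_sum) (auto intro!: divide_nonneg_pos)
  finally show "y \<le> (\<Sum>j<l. max 0 (p j - real (count_in {j} xs) / real T) / p j)" .
qed

text \<open>Summing \<open>p j - \<hat>p j \<le> D\<^sub>s p j\<close> over \<open>S\<close> and over its complement bounds the
  deviation of the empirical mass of \<open>S\<close> in both directions.\<close>

lemma sep_dist_ge_block:
  assumes xs: "xs \<in> samples l T" and T: "T \<ge> 1"
    and p_pos: "\<And>j. j < l \<Longrightarrow> 0 < p j" and p_sum: "(\<Sum>j<l. p j) = 1"
    and S: "S \<subseteq> {0..<l}" and r: "r = (\<Sum>j\<in>S. p j)" "0 < r" "r < 1"
  shows "max 0 (r - real (count_in S xs) / real T) / r
      + max 0 (real (count_in S xs) / real T - r) / (1 - r) \<le> sep_dist l (empirical xs) p"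
proof -
  define M where "M = sep_dist l (empirical xs) p"
  define s where "s = real (count_in S xs) / real T"
  have len: "length xs = T"
    using xs unfolding samples_def by simp
  have "l \<noteq> 0"
    using p_sum by (cases l) auto
  then have each: "p j - empirical xs j \<le> M * p j" if j: "j < l" for j
  proof -
    have "1 - empirical xs j / p j \<le> M"
      unfolding M_def sep_dist_def using j by (intro Max_ge) auto
    then show ?thesis
      using p_pos[OF j] by (simp add: field_simps)
  qed
  have emp_sum: "(\<Sum>j\<in>A. empirical xs j) = real (count_in A xs) / real T" if "finite A" for A
    unfolding empirical_eq_count_in len sum_divide_distrib[symmetric]
    using sum_count_in_singleton[OF that] by (metis of_nat_sum)
  have fin_S: "finite S"
    using S finite_subset by blast
  have "(\<Sum>j\<in>S. p j - empirical xs j) \<le> (\<Sum>j\<in>S. M * p j)"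
    using S by (intro sum_mono each) auto
  then have below: "r - s \<le> M * r"
    unfolding r s_def sum_subtractf emp_sum[OF fin_S] sum_distrib_left by simp
  let ?C = "{0..<l} - S"
  have "count_in {0..<l} xs = T"
    using xs unfolding samples_def count_in_def by (subst filter_True) auto
  then have "(\<Sum>j\<in>?C. empirical xs j) = 1 - s"
    using S T emp_sum[OF fin_S] emp_sum[of "{0..<l}"] unfolding s_def by (simp add: sum_diff)
  moreover have "(\<Sum>j\<in>?C. p j) = 1 - r"
    using S p_sum unfolding r by (simp add: sum_diff atLeast0LessThan)
  moreover have "(\<Sum>j\<in>?C. p j - empirical xs j) \<le> (\<Sum>j\<in>?C. M * p j)"
    by (intro sum_mono each) auto
  ultimately have above: "s - r \<le> M * (1 - r)"
    unfolding sum_subtractf sum_distrib_left[symmetric] by simp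
  show ?thesis
    using below above r unfolding M_def[symmetric] s_def[symmetric]
    by (cases "s \<le> r") (simp_all add: field_simps)
qed

lemma expected_sep_dist_le:
  assumes T: "T \<ge> 1" and p_pos: "\<And>j. j < l \<Longrightarrow> 0 < p j" and p_sum: "(\<Sum>j<l. p j) = 1"
  shows "iid_expect l p T (\<lambda>xs. sep_dist l (empirical xs) p) \<le> (\<Sum>j<l. binom_shortfall T (p j) / p j)"
proof -
  have "l \<ge> 1"
    using p_sum by (cases l) auto
  have shortfall: "iid_expect l p T (\<lambda>xs. max 0 (p j - real (count_in {j} xs) / real T) / p j)
      = binom_shortfall T (p j) / p j" if "j < l" for j
    using iid_expect_count_in[of "{j}" l p T "\<lambda>k. max 0 (p j - real k / real T) / p j"] p_sum that
    by (simp add: binom_shortfall_def sum_divide_distrib)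
  from \<open>l \<ge> 1\<close> have "iid_expect l p T (\<lambda>xs. sep_dist l (empirical xs) p)
      \<le> iid_expect l p T (\<lambda>xs. \<Sum>j<l. max 0 (p j - real (count_in {j} xs) / real T) / p j)"
    using p_pos by (intro iid_expect_mono sep_dist_le_sum_shortfalls T) (auto intro: less_imp_le)
  also have "\<dots> = (\<Sum>j<l. binom_shortfall T (p j) / p j)"
    unfolding iid_expect_sum using shortfall by (intro sum.cong) auto
  finally show ?thesis .
qed

lemma expected_sep_dist_ge:
  assumes T: "T \<ge> 1" and p_pos: "\<And>j. j < l \<Longrightarrow> 0 < p j" and p_sum: "(\<Sum>j<l. p j) = 1"
    and S: "S \<subseteq> {0..<l}" and r: "r = (\<Sum>j\<in>S. p j)" "0 < r" "r < 1"
  shows "binom_shortfall T r / (r * (1 - r)) \<le> iid_expect l p T (\<lambda>xs. sep_dist l (empirical xs) p)"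
proof -
  have "binom_shortfall T r / (r * (1 - r))
      = binom_shortfall T r / r + (\<Sum>k\<le>T. binom_prob T r k * max 0 (real k / real T - r)) / (1 - r)"
    unfolding binom_excess_eq_shortfall[OF T] using r by (simp add: field_simps)
  also have "\<dots> = (\<Sum>k\<le>T. binom_prob T r k * (max 0 (r - real k / real T) / r
                                           + max 0 (real k / real T - r) / (1 - r)))"
    unfolding binom_shortfall_def by (simp add: sum_divide_distrib sum.distrib distrib_left)
  also have "\<dots> = iid_expect l p T (\<lambda>xs. max 0 (r - real (count_in S xs) / real T) / r
                                      + max 0 (real (count_in S xs) / real T - r) / (1 - r))"
    using iid_expect_count_in[OF S p_sum, of T "\<lambda>k. max 0 (r - real k / real T) / r
                                                   + max 0 (real k / real T - r) / (1 - r)"]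
    unfolding r(1) by simp
  also have "\<dots> \<le> iid_expect l p T (\<lambda>xs. sep_dist l (empirical xs) p)"
    using p_pos by (intro iid_expect_mono sep_dist_ge_block[OF _ T p_pos p_sum S r])
      (auto intro: less_imp_le)
  finally show ?thesis .
qed

lemma rho1_eq:
  assumes "0 < p"
  shows "rho1 p = sqrt (p * (1 - p)) / p"
proof -
  have "(1 - p) / p = p * (1 - p) / p^2"
    using assms by (simp add: power2_eq_square)
  then have "rho1 p = sqrt (p * (1 - p)) / sqrt (p^2)"
    unfolding rho1_def by (simp only: real_sqrt_divide)
  then show ?thesis
    using assms by simp
qed

lemma rho2_eq:
  assumes "0 < r" "r < 1"
  shows "rho2 r = sqrt (r * (1 - r)) / (r * (1 - r))"
  unfolding rho2_def using assms by (simp add: rho1_eq field_simps)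

lemma c_s_tilde_attained:
  assumes "l \<ge> 2"
  obtains S where "S \<subseteq> {0..<l}" "1 \<le> card S" "card S < l" "c_s_tilde l p = rho2 (\<Sum>j\<in>S. p j)"
proof -
  define V where "V = {rho2 (\<Sum>j\<in>S. p j) | S. S \<subseteq> {0..<l} \<and> 1 \<le> card S \<and> card S < l}"
  have "V \<subseteq> (\<lambda>S. rho2 (\<Sum>j\<in>S. p j)) ` Pow {0..<l}"
    unfolding V_def by auto
  then have "finite V"
    by (rule finite_subset) simp
  moreover have "rho2 (\<Sum>j\<in>{0}. p j) \<in> V"
    unfolding V_def using assms by force
  ultimately have "c_s_tilde l p \<in> V"
    unfolding c_s_tilde_def V_def[symmetric] by (intro Max_in) auto
  then show thesis
    using that unfolding V_def by blast
qed

lemma sum_subset_bounds: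
  fixes p :: "nat \<Rightarrow> real"
  assumes p_pos: "\<And>j. j < l \<Longrightarrow> 0 < p j" and p_sum: "(\<Sum>j<l. p j) = 1"
    and S: "S \<subseteq> {0..<l}" "S \<noteq> {}" "S \<noteq> {0..<l}"
  shows "0 < (\<Sum>j\<in>S. p j)" "(\<Sum>j\<in>S. p j) < 1"
proof -
  show "0 < (\<Sum>j\<in>S. p j)"
    using S p_pos finite_subset by (intro sum_pos) auto
  have "0 < (\<Sum>j\<in>{0..<l} - S. p j)"
    using S p_pos by (intro sum_pos) auto
  then show "(\<Sum>j\<in>S. p j) < 1"
    using S p_sum by (simp add: sum_diff atLeast0LessThan)
qed

lemma sqrt_div_eq_mult_sqrt: "sqrt (a / x) = sqrt a * sqrt (1 / x)"
  by (simp add: real_sqrt_divide)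

lemma expected_sep_dist_upper_bound:
  assumes p_range: "\<And>j. j < l \<Longrightarrow> 0 < p j \<and> p j < 1" and p_sum: "(\<Sum>j<l. p j) = 1"
  shows "\<exists>C\<ge>0. \<forall>T\<ge>1. iid_expect l p T (\<lambda>xs. sep_dist l (empirical xs) p)
                        \<le> c_s l p * sqrt (1 / (2 * pi * real T)) + C / real T"
proof -
  have "\<forall>j\<in>{..<l}. \<exists>K\<ge>0. \<forall>n\<ge>1.
      \<bar>binom_shortfall n (p j) - sqrt (p j * (1 - p j) / (2 * pi * real n))\<bar> \<le> K / real n"
    using p_range binom_shortfall_approx by blast
  from bchoice[OF this] obtain K where K: "\<forall>j\<in>{..<l}. K j \<ge> 0 \<and> (\<forall>n\<ge>1.
      \<bar>binom_shortfall n (p j) - sqrt (p j * (1 - p j) / (2 * pi * real n))\<bar> \<le> K j / real n)"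
    by blast
  define C where "C = (\<Sum>j<l. K j / p j)"
  have "iid_expect l p T (\<lambda>xs. sep_dist l (empirical xs) p)
      \<le> c_s l p * sqrt (1 / (2 * pi * real T)) + C / real T" if T: "T \<ge> 1" for T
  proof -
    have term_eq: "(sqrt (p j * (1 - p j) / (2 * pi * real T)) + K j / real T) / p j
        = rho1 (p j) * sqrt (1 / (2 * pi * real T)) + K j / p j / real T" if "j < l" for j
    proof -
      have "0 < p j"
        using p_range that by blast
      then show ?thesis
        unfolding rho1_eq[OF \<open>0 < p j\<close>] sqrt_div_eq_mult_sqrt[of "p j * (1 - p j)"]
        by (simp add: field_simps)
    qed
    have "iid_expect l p T (\<lambda>xs. sep_dist l (empirical xs) p) \<le> (\<Sum>j<l. binom_shortfall T (p j) / p j)"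
      using T p_range p_sum by (intro expected_sep_dist_le) auto
    also have "\<dots> \<le> (\<Sum>j<l. (sqrt (p j * (1 - p j) / (2 * pi * real T)) + K j / real T) / p j)"
    proof (intro sum_mono divide_right_mono)
      fix j
      assume "j \<in> {..<l}"
      then have "\<bar>binom_shortfall T (p j) - sqrt (p j * (1 - p j) / (2 * pi * real T))\<bar> \<le> K j / real T"
        using K T by blast
      then show "binom_shortfall T (p j) \<le> sqrt (p j * (1 - p j) / (2 * pi * real T)) + K j / real T"
        by linarith
      show "0 \<le> p j"
        using p_range \<open>j \<in> {..<l}\<close> by (simp add: less_imp_le)
    qed
    also have "\<dots> = (\<Sum>j<l. rho1 (p j) * sqrt (1 / (2 * pi * real T)) + K j / p j / real T)"
      using term_eq by (intro sum.cong) auto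
    also have "\<dots> = c_s l p * sqrt (1 / (2 * pi * real T)) + C / real T"
      unfolding c_s_def C_def by (simp add: sum.distrib sum_distrib_right sum_divide_distrib)
    finally show ?thesis .
  qed
  moreover have "C \<ge> 0"
    unfolding C_def using K p_range by (intro sum_nonneg divide_nonneg_pos) auto
  ultimately show ?thesis
    by blast
qed

lemma expected_sep_dist_lower_bound:
  assumes p_range: "\<And>j. j < l \<Longrightarrow> 0 < p j \<and> p j < 1" and p_sum: "(\<Sum>j<l. p j) = 1"
  shows "\<exists>Ct\<ge>0. \<forall>T\<ge>1. c_s_tilde l p * sqrt (1 / (2 * pi * real T)) - Ct / real T
                         \<le> iid_expect l p T (\<lambda>xs. sep_dist l (empirical xs) p)"
proof -
  have p_pos: "\<And>j. j < l \<Longrightarrow> 0 < p j"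
    using p_range by blast
  have "l \<noteq> 0"
    using p_sum by (cases l) auto
  moreover have "l \<noteq> 1"
    using p_sum p_range[of 0] by auto
  ultimately have "l \<ge> 2"
    by linarith
  then obtain S where S: "S \<subseteq> {0..<l}" "1 \<le> card S" "card S < l"
    and c_s_tilde: "c_s_tilde l p = rho2 (\<Sum>j\<in>S. p j)"
    by (rule c_s_tilde_attained)
  define r where "r = (\<Sum>j\<in>S. p j)"
  have "S \<noteq> {}" "S \<noteq> {0..<l}"
    using S by auto
  then have r: "0 < r" "r < 1"
    using sum_subset_bounds[OF p_pos p_sum S(1)] unfolding r_def by auto
  obtain K where K: "K \<ge> 0" "\<And>n. n \<ge> 1 \<Longrightarrow>
      \<bar>binom_shortfall n r - sqrt (r * (1 - r) / (2 * pi * real n))\<bar> \<le> K / real n"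
    using binom_shortfall_approx[OF r] by blast
  define Ct where "Ct = K / (r * (1 - r))"
  have "c_s_tilde l p * sqrt (1 / (2 * pi * real T)) - Ct / real T
      \<le> iid_expect l p T (\<lambda>xs. sep_dist l (empirical xs) p)" if T: "T \<ge> 1" for T
  proof -
    have "c_s_tilde l p * sqrt (1 / (2 * pi * real T)) - Ct / real T
        = (sqrt (r * (1 - r) / (2 * pi * real T)) - K / real T) / (r * (1 - r))"
      unfolding c_s_tilde r_def[symmetric] rho2_eq[OF r] Ct_def sqrt_div_eq_mult_sqrt[of "r * (1 - r)"]
      by (simp add: diff_divide_distrib)
    also have "\<dots> \<le> binom_shortfall T r / (r * (1 - r))"
      using K(2)[OF T] r by (intro divide_right_mono) (auto simp: abs_le_iff)
    also have "\<dots> \<le> iid_expect l p T (\<lambda>xs. sep_dist l (empirical xs) p)"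
      using expected_sep_dist_ge[OF T p_pos p_sum S(1) r_def r] .
    finally show ?thesis .
  qed
  moreover have "Ct \<ge> 0"
    unfolding Ct_def using K r by simp
  ultimately show ?thesis
    by blast
qed

theorem mainTheorem2:
  fixes l :: nat and p :: "nat \<Rightarrow> real"
  assumes p_range: "\<And>j. j < l \<Longrightarrow> 0 < p j \<and> p j < 1"
    and p_sum: "(\<Sum>j<l. p j) = 1"
  shows "\<exists>C Ct. C \<ge> 0 \<and> Ct \<ge> 0 \<and>
    (\<forall>T::nat. T \<ge> 1 \<longrightarrow>
       c_s_tilde l p * sqrt (1 / (2 * pi * real T)) - Ct / real T
         \<le> iid_expect l p T (\<lambda>xs. sep_dist l (empirical xs) p)
     \<and> iid_expect l p T (\<lambda>xs. sep_dist l (empirical xs) p)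
         \<le> c_s l p * sqrt (1 / (2 * pi * real T)) + C / real T)"
proof -
  obtain C where "C \<ge> 0" "\<forall>T\<ge>1. iid_expect l p T (\<lambda>xs. sep_dist l (empirical xs) p)
                                  \<le> c_s l p * sqrt (1 / (2 * pi * real T)) + C / real T"
    using expected_sep_dist_upper_bound[OF p_range p_sum] by blast
  moreover obtain Ct where "Ct \<ge> 0" "\<forall>T\<ge>1. c_s_tilde l p * sqrt (1 / (2 * pi * real T)) - Ct / real T
                                   \<le> iid_expect l p T (\<lambda>xs. sep_dist l (empirical xs) p)"
    using expected_sep_dist_lower_bound[OF p_range p_sum] by blast
  ultimately show ?thesis
    by blast
qed

end
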